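(* Let $(R,\mathfrak{m},k)$ be a commutative Noetherian local ring, let $x,y\in R$ and let $n\ge0$ be an integer. For an $R$-module $M$ the following are equivalent: (1) there is an exact sequence of $R$-modules $0 \to (R/(x))^n \to M \to R/(y) \to 0$; (2) there is an exact sequence of $R$-modules $R^{n+1} \xrightarrow{T(x,y,a_1,\dots,a_n)} R^{n+1} \to M \to 0$ for some elements $a_1,\dots,a_n\in((x):(0:y))$.
   Context: For $x,y,a_1,\dots,a_n\in R$, $T(x,y,a_1,\dots,a_n)$ denotes the $(n+1)\times(n+1)$ matrix whose upper-left $n\times n$ block is $x$ times the identity matrix, whose last column is $(a_1,\dots,a_n,y)^{T}$, and all of whose other entries are $0$; for $n=0$ it is the $1\times1$ matrix $(y)$. Here $((x):(0:y))=\{r\in R : r\,(0:y)\subseteq (x)\}$, where $(0:y)=\{r\in R: ry=0\}$. *)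

theory Defs
  imports "HOL-Algebra.Module" "HOL-Algebra.QuotRing" "HOL-Algebra.Ring_Divisibility"
begin

definition local_cring :: "('a, 'c) ring_scheme \<Rightarrow> bool" where
  "local_cring R \<longleftrightarrow> cring R \<and> (\<exists>!m. maximalideal m R)"

definition mod_hom ::
  "('a, 'c) ring_scheme \<Rightarrow> ('a, 'b, 'd) module_scheme \<Rightarrow> ('a, 'e, 'f) module_scheme \<Rightarrow> ('b \<Rightarrow> 'e) set" where
  "mod_hom R M N = {f. f \<in> carrier M \<rightarrow> carrier N
     \<and> (\<forall>u\<in>carrier M. \<forall>v\<in>carrier M. f (u \<oplus>\<^bsub>M\<^esub> v) = f u \<oplus>\<^bsub>N\<^esub> f v)
     \<and> (\<forall>r\<in>carrier R. \<forall>u\<in>carrier M. f (r \<odot>\<^bsub>M\<^esub> u) = r \<odot>\<^bsub>N\<^esub> f u)}"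

definition mod_ker :: "('a, 'b, 'd) module_scheme \<Rightarrow> ('a, 'e, 'f) module_scheme \<Rightarrow> ('b \<Rightarrow> 'e) \<Rightarrow> 'b set" where
  "mod_ker M N f = {u \<in> carrier M. f u = \<zero>\<^bsub>N\<^esub>}"

definition self_mod :: "('a, 'c) ring_scheme \<Rightarrow> ('a, 'a) module" where
  "self_mod R = \<lparr>carrier = carrier R, monoid.mult = monoid.mult R, one = \<one>\<^bsub>R\<^esub>,
     zero = \<zero>\<^bsub>R\<^esub>, add = add R, smult = monoid.mult R\<rparr>"

definition quot_mod :: "('a, 'c) ring_scheme \<Rightarrow> 'a set \<Rightarrow> ('a, 'a set) module" where
  "quot_mod R I = \<lparr>carrier = carrier (R Quot I), monoid.mult = monoid.mult (R Quot I),
     one = \<one>\<^bsub>R Quot I\<^esub>, zero = \<zero>\<^bsub>R Quot I\<^esub>, add = add (R Quot I),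
     smult = (\<lambda>r X. rcoset_mult R I (I +>\<^bsub>R\<^esub> r) X)\<rparr>"

definition pow_mod :: "('a, 'b, 'd) module_scheme \<Rightarrow> nat \<Rightarrow> ('a, nat \<Rightarrow> 'b) module" where
  "pow_mod M n = \<lparr>carrier = PiE {..<n} (\<lambda>_. carrier M),
     monoid.mult = (\<lambda>u v. \<lambda>i\<in>{..<n}. u i \<otimes>\<^bsub>M\<^esub> v i),
     one = (\<lambda>i\<in>{..<n}. \<one>\<^bsub>M\<^esub>),
     zero = (\<lambda>i\<in>{..<n}. \<zero>\<^bsub>M\<^esub>),
     add = (\<lambda>u v. \<lambda>i\<in>{..<n}. u i \<oplus>\<^bsub>M\<^esub> v i),
     smult = (\<lambda>r u. \<lambda>i\<in>{..<n}. r \<odot>\<^bsub>M\<^esub> u i)\<rparr>"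

definition short_exact ::
  "('a, 'c) ring_scheme \<Rightarrow> ('a, 'b1, 'd1) module_scheme \<Rightarrow> ('a, 'b2, 'd2) module_scheme
   \<Rightarrow> ('a, 'b3, 'd3) module_scheme \<Rightarrow> ('b1 \<Rightarrow> 'b2) \<Rightarrow> ('b2 \<Rightarrow> 'b3) \<Rightarrow> bool" where
  "short_exact R A M B f g \<longleftrightarrow> f \<in> mod_hom R A M \<and> g \<in> mod_hom R M B
     \<and> inj_on f (carrier A) \<and> f ` carrier A = mod_ker M B g \<and> g ` carrier M = carrier B"

definition presentation_exact ::
  "('a, 'c) ring_scheme \<Rightarrow> ('a, 'b1, 'd1) module_scheme \<Rightarrow> ('a, 'b2, 'd2) module_scheme
   \<Rightarrow> ('a, 'b3, 'd3) module_scheme \<Rightarrow> ('b1 \<Rightarrow> 'b2) \<Rightarrow> ('b2 \<Rightarrow> 'b3) \<Rightarrow> bool" where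
  "presentation_exact R F G M h g \<longleftrightarrow> h \<in> mod_hom R F G \<and> g \<in> mod_hom R G M
     \<and> h ` carrier F = mod_ker G M g \<and> g ` carrier G = carrier M"

definition mat_map :: "('a, 'c) ring_scheme \<Rightarrow> nat \<Rightarrow> nat \<Rightarrow> (nat \<Rightarrow> nat \<Rightarrow> 'a) \<Rightarrow> (nat \<Rightarrow> 'a) \<Rightarrow> nat \<Rightarrow> 'a" where
  "mat_map R m n A v = (\<lambda>i\<in>{..<m}. finsum R (\<lambda>j. A i j \<otimes>\<^bsub>R\<^esub> v j) {..<n})"

text \<open>The (n+1)x(n+1) matrix T(x,y,a_1,...,a_n), rows/columns indexed 0..n:
  x on the diagonal of the upper-left n x n block, last column (a_1,...,a_n,y), zeros elsewhere.\<close>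
definition T_mat :: "('a, 'c) ring_scheme \<Rightarrow> nat \<Rightarrow> 'a \<Rightarrow> 'a \<Rightarrow> (nat \<Rightarrow> 'a) \<Rightarrow> nat \<Rightarrow> nat \<Rightarrow> 'a" where
  "T_mat R n x y a i j =
     (if j = n then (if i = n then y else a (Suc i))
      else if i = j then x else \<zero>\<^bsub>R\<^esub>)"

definition annihilator :: "('a, 'c) ring_scheme \<Rightarrow> 'a \<Rightarrow> 'a set" where
  "annihilator R y = {r \<in> carrier R. r \<otimes>\<^bsub>R\<^esub> y = \<zero>\<^bsub>R\<^esub>}"

definition colon_ideal :: "('a, 'c) ring_scheme \<Rightarrow> 'a set \<Rightarrow> 'a set \<Rightarrow> 'a set" where
  "colon_ideal R I J = {r \<in> carrier R. \<forall>s\<in>J. r \<otimes>\<^bsub>R\<^esub> s \<in> I}"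

end

theory Submission
  imports Defs
begin

(*
  Let I = (x), J = (y) and let e_0, ..., e_n be the standard basis of F = R^(n+1).

  Given 0 -> (R/I)^n --f--> M --h--> R/J -> 0, lift 1 + J to some m in M. Then y m lies in
  the kernel of h, so y m = f(b mod I) for some b in R^n, and v |-> f(v_0..v_(n-1) mod I) + v_n m
  maps F onto M with kernel the image of T(x, y, -b_0, ..., -b_(n-1)). These coefficients lie in
  (I : (0:y)): if s y = 0 then f(s b mod I) = s y m = 0, so s b lies in I^n as f is injective.

  Conversely, given a presentation g by T(x, y, a), the images of e_0, ..., e_(n-1) span a copy
  of (R/I)^n in M, and the last coordinate modulo J induces M -> R/J with exactly that kernel.
  A relation T w between the first n basis vectors has y w_n = 0, and a_i (0:y) is contained
  in I; this gives injectivity.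
*)

lemma pow_mod_simps:
  "carrier (pow_mod M n) = PiE {..<n} (\<lambda>_. carrier M)"
  "u \<oplus>\<^bsub>pow_mod M n\<^esub> v = (\<lambda>i\<in>{..<n}. u i \<oplus>\<^bsub>M\<^esub> v i)"
  "\<zero>\<^bsub>pow_mod M n\<^esub> = (\<lambda>i\<in>{..<n}. \<zero>\<^bsub>M\<^esub>)"
  "r \<odot>\<^bsub>pow_mod M n\<^esub> u = (\<lambda>i\<in>{..<n}. r \<odot>\<^bsub>M\<^esub> u i)"
  by (simp_all add: pow_mod_def)

lemma self_mod_simps:
  "carrier (self_mod R) = carrier R"
  "u \<oplus>\<^bsub>self_mod R\<^esub> v = u \<oplus>\<^bsub>R\<^esub> v"
  "\<zero>\<^bsub>self_mod R\<^esub> = \<zero>\<^bsub>R\<^esub>"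
  "r \<odot>\<^bsub>self_mod R\<^esub> u = r \<otimes>\<^bsub>R\<^esub> u"
  by (simp_all add: self_mod_def)

lemma quot_mod_simps:
  "carrier (quot_mod R I) = a_rcosets\<^bsub>R\<^esub> I"
  "X \<oplus>\<^bsub>quot_mod R I\<^esub> Y = X <+>\<^bsub>R\<^esub> Y"
  "\<zero>\<^bsub>quot_mod R I\<^esub> = I"
  "r \<odot>\<^bsub>quot_mod R I\<^esub> X = rcoset_mult R I (I +>\<^bsub>R\<^esub> r) X"
  by (simp_all add: quot_mod_def FactRing_def)

lemma (in cring) self_mod_module: "module R (self_mod R)"
proof (rule moduleI)
  show "abelian_group (self_mod R)"
    by (rule abelian_groupI) (auto simp: self_mod_simps a_ac intro: l_neg)
qed (auto simp: self_mod_simps cring_axioms m_assoc l_distr r_distr)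

lemma (in module) pow_mod_module: "module R (pow_mod M n)"
proof (rule moduleI)
  let ?P = "pow_mod M n"
  show "abelian_group ?P"
  proof (rule abelian_groupI)
    fix u assume u: "u \<in> carrier ?P"
    show "\<exists>v\<in>carrier ?P. v \<oplus>\<^bsub>?P\<^esub> u = \<zero>\<^bsub>?P\<^esub>"
    proof
      show "(\<lambda>i\<in>{..<n}. \<ominus>\<^bsub>M\<^esub> u i) \<oplus>\<^bsub>?P\<^esub> u = \<zero>\<^bsub>?P\<^esub>"
        using u by (intro extensionalityI[where A = "{..<n}"]) (auto simp: pow_mod_simps PiE_iff M.l_neg)
    qed (use u in \<open>auto simp: pow_mod_simps PiE_iff\<close>)
  qed (auto simp: pow_mod_simps PiE_iff M.a_ac intro!: extensionalityI[where A = "{..<n}"])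
qed (auto simp: pow_mod_simps PiE_iff is_cring smult_l_distr smult_r_distr smult_assoc1
    intro!: extensionalityI[where A = "{..<n}"])

lemma mod_homD:
  assumes "f \<in> mod_hom R A B"
  shows "u \<in> carrier A \<Longrightarrow> f u \<in> carrier B"
    and "u \<in> carrier A \<Longrightarrow> v \<in> carrier A \<Longrightarrow> f (u \<oplus>\<^bsub>A\<^esub> v) = f u \<oplus>\<^bsub>B\<^esub> f v"
    and "r \<in> carrier R \<Longrightarrow> u \<in> carrier A \<Longrightarrow> f (r \<odot>\<^bsub>A\<^esub> u) = r \<odot>\<^bsub>B\<^esub> f u"
  using assms by (auto simp: mod_hom_def)

lemma mod_hom_comp:
  assumes "f \<in> mod_hom R A B" "g \<in> mod_hom R B C"
  shows "g \<circ> f \<in> mod_hom R A C"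
  using assms unfolding mod_hom_def by (auto simp: Pi_iff)

lemma (in module) mod_hom_add:
  assumes "f \<in> mod_hom R A M" "g \<in> mod_hom R A M"
  shows "(\<lambda>u. f u \<oplus>\<^bsub>M\<^esub> g u) \<in> mod_hom R A M"
  using assms unfolding mod_hom_def
  by (auto simp: Pi_def smult_r_distr M.a_ac)

lemma mod_hom_zero:
  assumes A: "module R A" and B: "module R B" and f: "f \<in> mod_hom R A B"
  shows "f \<zero>\<^bsub>A\<^esub> = \<zero>\<^bsub>B\<^esub>"
proof -
  interpret A: module R A by (fact A)
  interpret B: module R B by (fact B)
  have "f \<zero>\<^bsub>A\<^esub> = f (\<zero>\<^bsub>R\<^esub> \<odot>\<^bsub>A\<^esub> \<zero>\<^bsub>A\<^esub>)" by simp
  also have "\<dots> = \<zero>\<^bsub>R\<^esub> \<odot>\<^bsub>B\<^esub> f \<zero>\<^bsub>A\<^esub>" by (rule mod_homD(3)[OF f]) simp_all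
  also have "\<dots> = \<zero>\<^bsub>B\<^esub>" using mod_homD(1)[OF f] by simp
  finally show ?thesis .
qed

lemma mod_hom_factor:
  assumes A: "module R A"
    and p: "p \<in> mod_hom R A B" "p ` carrier A = carrier B"
    and \<psi>: "\<psi> \<in> mod_hom R A C"
    and fibres: "\<And>u v. u \<in> carrier A \<Longrightarrow> v \<in> carrier A \<Longrightarrow> p u = p v \<Longrightarrow> \<psi> u = \<psi> v"
  obtains \<phi> where "\<phi> \<in> mod_hom R B C" "\<And>u. u \<in> carrier A \<Longrightarrow> \<phi> (p u) = \<psi> u"
proof
  interpret A: module R A by (fact A)
  define \<phi> where "\<phi> b = \<psi> (SOME u. u \<in> carrier A \<and> p u = b)" for b
  show \<phi>p: "\<phi> (p u) = \<psi> u" if u: "u \<in> carrier A" for u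
  proof -
    have "\<exists>u'. u' \<in> carrier A \<and> p u' = p u" using u by blast
    from someI_ex[OF this] show ?thesis
      unfolding \<phi>_def using fibres u by blast
  qed
  have lift: "\<exists>u\<in>carrier A. b = p u" if "b \<in> carrier B" for b
    using p(2) that by blast
  show "\<phi> \<in> mod_hom R B C"
    unfolding mod_hom_def
  proof (intro CollectI conjI ballI)
    show "\<phi> \<in> carrier B \<rightarrow> carrier C"
      using lift \<phi>p mod_homD(1)[OF \<psi>] by fastforce
  next
    fix b b' assume "b \<in> carrier B" "b' \<in> carrier B"
    then obtain u u' where "u \<in> carrier A" "u' \<in> carrier A" "b = p u" "b' = p u'"
      using lift by blast
    moreover have "u \<oplus>\<^bsub>A\<^esub> u' \<in> carrier A" "p (u \<oplus>\<^bsub>A\<^esub> u') = b \<oplus>\<^bsub>B\<^esub> b'"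
      using p(1) \<open>b = p u\<close> \<open>b' = p u'\<close> \<open>u \<in> carrier A\<close> \<open>u' \<in> carrier A\<close>
      by (auto simp: mod_hom_def)
    ultimately show "\<phi> (b \<oplus>\<^bsub>B\<^esub> b') = \<phi> b \<oplus>\<^bsub>C\<^esub> \<phi> b'"
      using \<phi>p mod_homD(2)[OF \<psi>] by metis
  next
    fix r b assume "r \<in> carrier R" "b \<in> carrier B"
    then obtain u where "u \<in> carrier A" "b = p u"
      using lift by blast
    moreover have "r \<odot>\<^bsub>A\<^esub> u \<in> carrier A" "p (r \<odot>\<^bsub>A\<^esub> u) = r \<odot>\<^bsub>B\<^esub> b"
      using \<open>r \<in> carrier R\<close> p(1) \<open>u \<in> carrier A\<close> \<open>b = p u\<close> by (auto simp: mod_hom_def)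
    ultimately show "\<phi> (r \<odot>\<^bsub>B\<^esub> b) = r \<odot>\<^bsub>C\<^esub> \<phi> b"
      using \<open>r \<in> carrier R\<close> \<phi>p mod_homD(3)[OF \<psi>] by metis
  qed
qed

context cring
begin

lemma PIdl_mem_iff: "r \<in> PIdl y \<longleftrightarrow> (\<exists>d\<in>carrier R. r = d \<otimes> y)"
  by (auto simp: cgenideal_def)

lemma rcos_eq_iff:
  assumes "ideal I R" "a \<in> carrier R" "b \<in> carrier R"
  shows "I +> a = I +> b \<longleftrightarrow> a \<ominus> b \<in> I"
proof -
  interpret I: abelian_subgroup I R
    using abelian_subgroupI3[OF ideal.axioms(1)[OF assms(1)] is_abelian_group] .
  have "I +> a = I +> b \<longleftrightarrow> a \<in> I +> b"
    using assms I.a_rcos_self I.a_repr_independence' by metis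
  also have "\<dots> \<longleftrightarrow> a \<ominus> b \<in> I"
    using I.a_rcos_module_minus[OF ring_axioms] assms by blast
  finally show ?thesis .
qed

lemma rcos_eq_ideal_iff:
  assumes "ideal I R" "a \<in> carrier R"
  shows "I +> a = I \<longleftrightarrow> a \<in> I"
  using assms ideal.rcos_const_imp_mem a_rcos_zero by metis

lemma rcos_zero_ideal: "ideal I R \<Longrightarrow> I +> \<zero> = I"
  by (simp add: a_rcos_zero additive_subgroup.zero_closed ideal.axioms(1))

lemma quot_mod_carrier_iff:
  "X \<in> carrier (quot_mod R I) \<longleftrightarrow> (\<exists>b\<in>carrier R. X = I +> b)"
  by (auto simp: quot_mod_simps A_RCOSETS_def')

lemma quot_mod_rcos_add:
  assumes "ideal I R" "a \<in> carrier R" "b \<in> carrier R"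
  shows "(I +> a) \<oplus>\<^bsub>quot_mod R I\<^esub> (I +> b) = I +> (a \<oplus> b)"
  using assms by (simp add: quot_mod_simps ideal.a_rcos_sum)

lemma quot_mod_rcos_smult:
  assumes "ideal I R" "r \<in> carrier R" "b \<in> carrier R"
  shows "r \<odot>\<^bsub>quot_mod R I\<^esub> (I +> b) = I +> (r \<otimes> b)"
  using assms by (simp add: quot_mod_simps ideal.rcoset_mult_add)

lemma quot_mod_module:
  assumes I: "ideal I R"
  shows "module R (quot_mod R I)"
proof (rule moduleI)
  interpret Q: ring "R Quot I" using I by (rule ideal.quotient_is_ring)
  have Q: "carrier (quot_mod R I) = carrier (R Quot I)" "add (quot_mod R I) = add (R Quot I)"
    "zero (quot_mod R I) = zero (R Quot I)"
    by (simp_all add: quot_mod_def)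
  show "abelian_group (quot_mod R I)"
  proof (rule abelian_groupI; unfold Q)
    fix X assume "X \<in> carrier (R Quot I)"
    then show "\<exists>Y\<in>carrier (R Quot I). Y \<oplus>\<^bsub>R Quot I\<^esub> X = \<zero>\<^bsub>R Quot I\<^esub>"
      using Q.l_neg Q.a_inv_closed by blast
  qed (fact Q.a_closed Q.zero_closed Q.a_assoc Q.a_comm Q.l_zero)+
qed (auto simp: is_cring quot_mod_carrier_iff quot_mod_rcos_add[OF I] quot_mod_rcos_smult[OF I]
    l_distr r_distr m_assoc)

end

lemma presentation_fibre_iff:
  assumes F: "module R F" and M: "module R M" and g: "g \<in> mod_hom R F M"
    and ker: "h ` carrier G = mod_ker F M g"
    and v: "v \<in> carrier F" and v': "v' \<in> carrier F"
  shows "g v = g v' \<longleftrightarrow> (\<exists>w\<in>carrier G. v = v' \<oplus>\<^bsub>F\<^esub> h w)"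
proof
  interpret F: module R F by (fact F)
  interpret M: module R M by (fact M)
  assume eq: "g v = g v'"
  have neg: "\<ominus>\<^bsub>F\<^esub> v' = (\<ominus>\<^bsub>R\<^esub> \<one>\<^bsub>R\<^esub>) \<odot>\<^bsub>F\<^esub> v'"
    using F.smult_l_minus[of "\<one>\<^bsub>R\<^esub>" v'] v' by simp
  have "g (v \<oplus>\<^bsub>F\<^esub> \<ominus>\<^bsub>F\<^esub> v') = g v \<oplus>\<^bsub>M\<^esub> (\<ominus>\<^bsub>R\<^esub> \<one>\<^bsub>R\<^esub>) \<odot>\<^bsub>M\<^esub> g v'"
    using v v' mod_homD[OF g] by (simp add: neg)
  also have "\<dots> = \<zero>\<^bsub>M\<^esub>"
    using eq mod_homD(1)[OF g v'] M.smult_l_minus[of "\<one>\<^bsub>R\<^esub>" "g v'"] by (simp add: M.r_neg)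
  finally have "v \<oplus>\<^bsub>F\<^esub> \<ominus>\<^bsub>F\<^esub> v' \<in> h ` carrier G"
    using v v' ker by (simp add: mod_ker_def)
  moreover have "v = v' \<oplus>\<^bsub>F\<^esub> (v \<oplus>\<^bsub>F\<^esub> \<ominus>\<^bsub>F\<^esub> v')"
    using v v' by (simp add: F.add.m_lcomm F.r_neg)
  ultimately show "\<exists>w\<in>carrier G. v = v' \<oplus>\<^bsub>F\<^esub> h w" by auto
next
  interpret M: module R M by (fact M)
  assume "\<exists>w\<in>carrier G. v = v' \<oplus>\<^bsub>F\<^esub> h w"
  then obtain w where "w \<in> carrier G" "v = v' \<oplus>\<^bsub>F\<^esub> h w" by blast
  moreover from \<open>w \<in> carrier G\<close> have "h w \<in> carrier F" "g (h w) = \<zero>\<^bsub>M\<^esub>"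
    using ker by (auto simp: mod_ker_def)
  ultimately show "g v = g v'"
    using v' mod_homD[OF g] by simp
qed

abbreviation free_mod :: "('a, 'c) ring_scheme \<Rightarrow> nat \<Rightarrow> ('a, nat \<Rightarrow> 'a) module" where
  "free_mod R k \<equiv> pow_mod (self_mod R) k"

lemma free_mod_carrier_iff:
  "v \<in> carrier (free_mod R k) \<longleftrightarrow> (\<forall>i<k. v i \<in> carrier R) \<and> v \<in> extensional {..<k}"
  by (auto simp: pow_mod_simps self_mod_simps PiE_iff)

lemma (in cring) free_mod_module: "module R (free_mod R k)"
  using module.pow_mod_module[OF self_mod_module] .

definition coset_vec :: "('a, 'c) ring_scheme \<Rightarrow> 'a set \<Rightarrow> nat \<Rightarrow> (nat \<Rightarrow> 'a) \<Rightarrow> nat \<Rightarrow> 'a set" where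
  "coset_vec R I n c = (\<lambda>j\<in>{..<n}. I +>\<^bsub>R\<^esub> c j)"

lemma coset_vec_cong:
  "(\<And>j. j < n \<Longrightarrow> c j = d j) \<Longrightarrow> coset_vec R I n c = coset_vec R I n d"
  unfolding coset_vec_def by (rule restrict_ext) simp

context cring
begin

lemma coset_vec_eq_iff:
  assumes "ideal I R" "\<And>j. j < n \<Longrightarrow> c j \<in> carrier R" "\<And>j. j < n \<Longrightarrow> d j \<in> carrier R"
  shows "coset_vec R I n c = coset_vec R I n d \<longleftrightarrow> (\<forall>j<n. c j \<ominus> d j \<in> I)"
  using assms rcos_eq_iff by (auto simp: coset_vec_def fun_eq_iff)

lemma coset_vec_add:
  assumes "ideal I R" "\<And>j. j < n \<Longrightarrow> c j \<in> carrier R" "\<And>j. j < n \<Longrightarrow> d j \<in> carrier R"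
  shows "coset_vec R I n c \<oplus>\<^bsub>pow_mod (quot_mod R I) n\<^esub> coset_vec R I n d
    = coset_vec R I n (\<lambda>j. c j \<oplus> d j)"
  unfolding coset_vec_def pow_mod_simps by (rule restrict_ext) (simp add: assms quot_mod_rcos_add)

lemma coset_vec_smult:
  assumes "ideal I R" "r \<in> carrier R" "\<And>j. j < n \<Longrightarrow> c j \<in> carrier R"
  shows "r \<odot>\<^bsub>pow_mod (quot_mod R I) n\<^esub> coset_vec R I n c = coset_vec R I n (\<lambda>j. r \<otimes> c j)"
  unfolding coset_vec_def pow_mod_simps by (rule restrict_ext) (simp add: assms quot_mod_rcos_smult)

lemma coset_vec_carrier:
  "(\<And>j. j < n \<Longrightarrow> c j \<in> carrier R) \<Longrightarrow> coset_vec R I n c \<in> carrier (pow_mod (quot_mod R I) n)"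
  by (auto simp: coset_vec_def pow_mod_simps quot_mod_carrier_iff intro!: bexI)

lemma coset_vec_hom:
  assumes I: "ideal I R" and "n \<le> k"
  shows "coset_vec R I n \<in> mod_hom R (free_mod R k) (pow_mod (quot_mod R I) n)"
proof -
  have [simp]: "v \<in> carrier (free_mod R k) \<Longrightarrow> j < n \<Longrightarrow> v j \<in> carrier R" for v j
    using \<open>n \<le> k\<close> by (simp add: free_mod_carrier_iff)
  show ?thesis
    unfolding mod_hom_def
  proof (intro CollectI conjI ballI)
    show "coset_vec R I n \<in> carrier (free_mod R k) \<rightarrow> carrier (pow_mod (quot_mod R I) n)"
      by (simp add: coset_vec_carrier)
  next
    fix u v assume "u \<in> carrier (free_mod R k)" "v \<in> carrier (free_mod R k)"
    moreover have "coset_vec R I n (u \<oplus>\<^bsub>free_mod R k\<^esub> v) = coset_vec R I n (\<lambda>j. u j \<oplus> v j)"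
      using \<open>n \<le> k\<close> by (intro coset_vec_cong) (simp add: pow_mod_simps self_mod_simps)
    ultimately show "coset_vec R I n (u \<oplus>\<^bsub>free_mod R k\<^esub> v)
        = coset_vec R I n u \<oplus>\<^bsub>pow_mod (quot_mod R I) n\<^esub> coset_vec R I n v"
      by (simp add: coset_vec_add[OF I])
  next
    fix r v assume "r \<in> carrier R" "v \<in> carrier (free_mod R k)"
    moreover have "coset_vec R I n (r \<odot>\<^bsub>free_mod R k\<^esub> v) = coset_vec R I n (\<lambda>j. r \<otimes> v j)"
      using \<open>n \<le> k\<close> by (intro coset_vec_cong) (simp add: pow_mod_simps self_mod_simps)
    ultimately show "coset_vec R I n (r \<odot>\<^bsub>free_mod R k\<^esub> v)
        = r \<odot>\<^bsub>pow_mod (quot_mod R I) n\<^esub> coset_vec R I n v"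
      by (simp add: coset_vec_smult[OF I])
  qed
qed

lemma coset_vec_surj:
  "coset_vec R I n ` carrier (free_mod R n) = carrier (pow_mod (quot_mod R I) n)"
proof
  show "coset_vec R I n ` carrier (free_mod R n) \<subseteq> carrier (pow_mod (quot_mod R I) n)"
    by (auto simp: free_mod_carrier_iff intro: coset_vec_carrier)
  show "carrier (pow_mod (quot_mod R I) n) \<subseteq> coset_vec R I n ` carrier (free_mod R n)"
  proof
    fix u assume u: "u \<in> carrier (pow_mod (quot_mod R I) n)"
    then have "\<forall>j\<in>{..<n}. \<exists>b\<in>carrier R. u j = I +> b"
      by (auto simp: pow_mod_simps quot_mod_carrier_iff)
    then obtain c where c: "\<forall>j\<in>{..<n}. c j \<in> carrier R \<and> u j = I +> c j"
      by metis
    then have "u = coset_vec R I n (restrict c {..<n})"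
      using u by (auto simp: coset_vec_def pow_mod_simps PiE_iff intro: extensionalityI)
    moreover have "restrict c {..<n} \<in> carrier (free_mod R n)"
      using c by (simp add: free_mod_carrier_iff)
    ultimately show "u \<in> coset_vec R I n ` carrier (free_mod R n)" by blast
  qed
qed

lemma rcos_coord_hom:
  assumes J: "ideal J R" and "i < k"
  shows "(\<lambda>v. J +> v i) \<in> mod_hom R (free_mod R k) (quot_mod R J)"
proof -
  have [simp]: "v \<in> carrier (free_mod R k) \<Longrightarrow> v i \<in> carrier R" for v
    using \<open>i < k\<close> by (simp add: free_mod_carrier_iff)
  show ?thesis
    unfolding mod_hom_def
  proof (intro CollectI conjI ballI)
    show "(\<lambda>v. J +> v i) \<in> carrier (free_mod R k) \<rightarrow> carrier (quot_mod R J)"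
      by (auto simp: quot_mod_carrier_iff intro!: bexI)
  next
    fix u v assume "u \<in> carrier (free_mod R k)" "v \<in> carrier (free_mod R k)"
    then show "J +> (u \<oplus>\<^bsub>free_mod R k\<^esub> v) i = (J +> u i) \<oplus>\<^bsub>quot_mod R J\<^esub> (J +> v i)"
      using \<open>i < k\<close> by (simp add: quot_mod_rcos_add[OF J] pow_mod_simps self_mod_simps)
  next
    fix r v assume "r \<in> carrier R" "v \<in> carrier (free_mod R k)"
    then show "J +> (r \<odot>\<^bsub>free_mod R k\<^esub> v) i = r \<odot>\<^bsub>quot_mod R J\<^esub> (J +> v i)"
      using \<open>i < k\<close> by (simp add: quot_mod_rcos_smult[OF J] pow_mod_simps self_mod_simps)
  qed
qed

end

definition vec_snoc :: "nat \<Rightarrow> (nat \<Rightarrow> 'a) \<Rightarrow> 'a \<Rightarrow> nat \<Rightarrow> 'a" where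
  "vec_snoc n c r = (\<lambda>i\<in>{..<Suc n}. if i < n then c i else r)"

lemma vec_snoc_nth [simp]:
  "i < n \<Longrightarrow> vec_snoc n c r i = c i"
  "vec_snoc n c r n = r"
  by (simp_all add: vec_snoc_def)

lemma vec_snoc_eq_iff: "vec_snoc n c r = vec_snoc n c' r' \<longleftrightarrow> (\<forall>i<n. c i = c' i) \<and> r = r'"
  by (auto simp: vec_snoc_def restrict_def fun_eq_iff)

lemma vec_snoc_carrier:
  "(\<And>i. i < n \<Longrightarrow> c i \<in> carrier R) \<Longrightarrow> r \<in> carrier R \<Longrightarrow> vec_snoc n c r \<in> carrier (free_mod R (Suc n))"
  by (simp add: vec_snoc_def free_mod_carrier_iff)

lemma vec_snoc_eta: "v \<in> carrier (free_mod R (Suc n)) \<Longrightarrow> vec_snoc n v (v n) = v"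
  unfolding free_mod_carrier_iff
  by (auto simp: vec_snoc_def less_Suc_eq intro!: extensionalityI[where A = "{..<Suc n}"])

lemma vec_snoc_add:
  "vec_snoc n c r \<oplus>\<^bsub>free_mod R (Suc n)\<^esub> vec_snoc n c' r' = vec_snoc n (\<lambda>i. c i \<oplus>\<^bsub>R\<^esub> c' i) (r \<oplus>\<^bsub>R\<^esub> r')"
  by (auto simp: vec_snoc_def pow_mod_simps self_mod_simps)

lemma vec_snoc_smult:
  "s \<odot>\<^bsub>free_mod R (Suc n)\<^esub> vec_snoc n c r = vec_snoc n (\<lambda>i. s \<otimes>\<^bsub>R\<^esub> c i) (s \<otimes>\<^bsub>R\<^esub> r)"
  by (auto simp: vec_snoc_def pow_mod_simps self_mod_simps)

context cring
begin

lemma vec_snoc_zero_hom: "(\<lambda>c. vec_snoc n c \<zero>) \<in> mod_hom R (free_mod R n) (free_mod R (Suc n))"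
  unfolding mod_hom_def
proof (intro CollectI conjI ballI)
  show "(\<lambda>c. vec_snoc n c \<zero>) \<in> carrier (free_mod R n) \<rightarrow> carrier (free_mod R (Suc n))"
  proof
    fix c assume "c \<in> carrier (free_mod R n)"
    then show "vec_snoc n c \<zero> \<in> carrier (free_mod R (Suc n))"
      by (intro vec_snoc_carrier) (auto simp: free_mod_carrier_iff)
  qed
qed (simp_all add: vec_snoc_add vec_snoc_smult vec_snoc_eq_iff, simp_all add: pow_mod_simps self_mod_simps)

lemma mat_map_hom:
  assumes A: "\<And>i j. i < m \<Longrightarrow> j < k \<Longrightarrow> A i j \<in> carrier R"
  shows "mat_map R m k A \<in> mod_hom R (free_mod R k) (free_mod R m)"
  unfolding mod_hom_def
proof (intro CollectI conjI ballI)
  show "mat_map R m k A \<in> carrier (free_mod R k) \<rightarrow> carrier (free_mod R m)"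
    using A by (auto simp: mat_map_def free_mod_carrier_iff)
next
  fix u v assume uv: "u \<in> carrier (free_mod R k)" "v \<in> carrier (free_mod R k)"
  have "(\<Oplus>j\<in>{..<k}. A i j \<otimes> (u \<oplus>\<^bsub>free_mod R k\<^esub> v) j)
      = (\<Oplus>j\<in>{..<k}. A i j \<otimes> u j \<oplus> A i j \<otimes> v j)"
    if "i < m" for i
    using A uv that by (intro finsum_cong')
      (auto simp: PiE_iff r_distr pow_mod_simps self_mod_simps)
  also have "\<dots> i = (\<Oplus>j\<in>{..<k}. A i j \<otimes> u j) \<oplus> (\<Oplus>j\<in>{..<k}. A i j \<otimes> v j)"
    if "i < m" for i
    using A uv that by (intro finsum_addf) (auto simp: free_mod_carrier_iff)
  finally show "mat_map R m k A (u \<oplus>\<^bsub>free_mod R k\<^esub> v)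
      = mat_map R m k A u \<oplus>\<^bsub>free_mod R m\<^esub> mat_map R m k A v"
    by (auto simp: mat_map_def pow_mod_simps self_mod_simps intro!: restrict_ext)
next
  fix r v assume rv: "r \<in> carrier R" "v \<in> carrier (free_mod R k)"
  have "(\<Oplus>j\<in>{..<k}. A i j \<otimes> (r \<odot>\<^bsub>free_mod R k\<^esub> v) j) = r \<otimes> (\<Oplus>j\<in>{..<k}. A i j \<otimes> v j)"
    if "i < m" for i
  proof -
    have "(\<Oplus>j\<in>{..<k}. A i j \<otimes> (r \<odot>\<^bsub>free_mod R k\<^esub> v) j) = (\<Oplus>j\<in>{..<k}. r \<otimes> (A i j \<otimes> v j))"
      using A rv that by (intro finsum_cong')
        (auto simp: PiE_iff m_lcomm pow_mod_simps self_mod_simps)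
    also have "\<dots> = r \<otimes> (\<Oplus>j\<in>{..<k}. A i j \<otimes> v j)"
      using A rv that by (intro finsum_rdistr[symmetric]) (auto simp: free_mod_carrier_iff)
    finally show ?thesis .
  qed
  then show "mat_map R m k A (r \<odot>\<^bsub>free_mod R k\<^esub> v) = r \<odot>\<^bsub>free_mod R m\<^esub> mat_map R m k A v"
    by (auto simp: mat_map_def pow_mod_simps self_mod_simps intro!: restrict_ext)
qed

section \<open>The matrix \<open>T\<close>\<close>

lemma T_mat_closed:
  assumes "\<forall>i\<in>{1..n}. a i \<in> carrier R" "x \<in> carrier R" "y \<in> carrier R" "i < Suc n"
  shows "T_mat R n x y a i j \<in> carrier R"
  using assms by (auto simp: T_mat_def)

lemma T_mat_hom:
  assumes "\<forall>i\<in>{1..n}. a i \<in> carrier R" "x \<in> carrier R" "y \<in> carrier R"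
  shows "mat_map R (Suc n) (Suc n) (T_mat R n x y a) \<in> mod_hom R (free_mod R (Suc n)) (free_mod R (Suc n))"
  using assms by (intro mat_map_hom T_mat_closed)

lemma mat_map_T_mat_vec_snoc:
  assumes a: "\<forall>i\<in>{1..n}. a i \<in> carrier R" and x: "x \<in> carrier R" and y: "y \<in> carrier R"
    and t: "\<And>i. i < n \<Longrightarrow> t i \<in> carrier R" and s: "s \<in> carrier R"
  shows "mat_map R (Suc n) (Suc n) (T_mat R n x y a) (vec_snoc n t s)
    = vec_snoc n (\<lambda>i. x \<otimes> t i \<oplus> a (Suc i) \<otimes> s) (y \<otimes> s)"
proof
  fix i
  let ?T = "T_mat R n x y a"
  have row: "(\<Oplus>j\<in>{..<Suc n}. ?T i j \<otimes> vec_snoc n t s j)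
      = ?T i n \<otimes> s \<oplus> (\<Oplus>j\<in>{..<n}. ?T i j \<otimes> t j)" if "i < Suc n"
    using T_mat_closed[OF a x y that] t s
    by (simp add: lessThan_Suc finsum_insert Pi_def, intro finsum_cong') auto
  show "mat_map R (Suc n) (Suc n) ?T (vec_snoc n t s) i
      = vec_snoc n (\<lambda>i. x \<otimes> t i \<oplus> a (Suc i) \<otimes> s) (y \<otimes> s) i"
  proof (cases "i < n")
    case True
    have "(\<Oplus>j\<in>{..<n}. ?T i j \<otimes> t j) = (\<Oplus>j\<in>{..<n}. if i = j then x \<otimes> t j else \<zero>)"
      using t x by (intro finsum_cong') (auto simp: T_mat_def)
    also have "\<dots> = x \<otimes> t i"
      using True t x by (intro finsum_singleton) auto
    finally show ?thesis
      using True row a t x s by (simp add: mat_map_def T_mat_def a_comm)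
  next
    case False
    moreover have "(\<Oplus>j\<in>{..<n}. ?T n j \<otimes> t j) = \<zero>"
      using t by (intro add.finprod_one_eqI) (auto simp: T_mat_def)
    ultimately show ?thesis
      using row y s by (cases "i = n") (auto simp: mat_map_def T_mat_def vec_snoc_def)
  qed
qed

end

lemma (in module) T_presentation_fibre_iff:
  assumes a: "\<forall>i\<in>{1..n}. a i \<in> carrier R" and x: "x \<in> carrier R" and y: "y \<in> carrier R"
    and g: "g \<in> mod_hom R (free_mod R (Suc n)) M"
    and ker: "mat_map R (Suc n) (Suc n) (T_mat R n x y a) ` carrier (free_mod R (Suc n))
      = mod_ker (free_mod R (Suc n)) M g"
    and c: "\<And>i. i < n \<Longrightarrow> c i \<in> carrier R" "r \<in> carrier R"
    and c': "\<And>i. i < n \<Longrightarrow> c' i \<in> carrier R" "r' \<in> carrier R"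
  shows "g (vec_snoc n c r) = g (vec_snoc n c' r') \<longleftrightarrow>
    (\<exists>t s. (\<forall>i<n. t i \<in> carrier R) \<and> s \<in> carrier R
      \<and> (\<forall>i<n. c i = c' i \<oplus> (x \<otimes> t i \<oplus> a (Suc i) \<otimes> s)) \<and> r = r' \<oplus> y \<otimes> s)"
    (is "_ \<longleftrightarrow> ?fibre")
proof -
  let ?F = "free_mod R (Suc n)" and ?T = "mat_map R (Suc n) (Suc n) (T_mat R n x y a)"
  have "g (vec_snoc n c r) = g (vec_snoc n c' r')
      \<longleftrightarrow> (\<exists>w\<in>carrier ?F. vec_snoc n c r = vec_snoc n c' r' \<oplus>\<^bsub>?F\<^esub> ?T w)"
    using c c' by (intro presentation_fibre_iff[OF free_mod_module module_axioms g ker] vec_snoc_carrier)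
  also have "\<dots> \<longleftrightarrow> (\<exists>t s. (\<forall>i<n. t i \<in> carrier R) \<and> s \<in> carrier R
      \<and> vec_snoc n c r = vec_snoc n c' r' \<oplus>\<^bsub>?F\<^esub> ?T (vec_snoc n t s))" (is "?L \<longleftrightarrow> ?R")
  proof
    assume ?L
    then obtain w where w: "w \<in> carrier ?F" "vec_snoc n c r = vec_snoc n c' r' \<oplus>\<^bsub>?F\<^esub> ?T w"
      by blast
    then have "\<forall>i<n. w i \<in> carrier R" "w n \<in> carrier R"
      by (simp_all add: free_mod_carrier_iff)
    with w show ?R
      by (intro exI[of _ w] exI[of _ "w n"]) (simp add: vec_snoc_eta)
  next
    assume ?R
    then obtain t s where "\<forall>i<n. t i \<in> carrier R" "s \<in> carrier R"
      "vec_snoc n c r = vec_snoc n c' r' \<oplus>\<^bsub>?F\<^esub> ?T (vec_snoc n t s)"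
      by blast
    then show ?L
      by (intro bexI[of _ "vec_snoc n t s"] vec_snoc_carrier) auto
  qed
  also have "\<dots> \<longleftrightarrow> ?fibre"
  proof -
    have "vec_snoc n c r = vec_snoc n c' r' \<oplus>\<^bsub>?F\<^esub> ?T (vec_snoc n t s)
      \<longleftrightarrow> (\<forall>i<n. c i = c' i \<oplus> (x \<otimes> t i \<oplus> a (Suc i) \<otimes> s)) \<and> r = r' \<oplus> y \<otimes> s"
      if "\<forall>i<n. t i \<in> carrier R" "s \<in> carrier R" for t s
      using that by (simp add: mat_map_T_mat_vec_snoc[OF a x y] vec_snoc_add vec_snoc_eq_iff)
    then show ?thesis by blast
  qed
  finally show ?thesis .
qed

section \<open>From a presentation by \<open>T\<close> to an extension\<close>

locale T_presentation = module R M for R :: "('a, 'c) ring_scheme" (structure)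
    and M :: "('a, 'b, 'd) module_scheme" +
  fixes n :: nat and x y :: 'a and a :: "nat \<Rightarrow> 'a" and g :: "(nat \<Rightarrow> 'a) \<Rightarrow> 'b"
  assumes x: "x \<in> carrier R" and y: "y \<in> carrier R"
    and a_colon: "\<forall>i\<in>{1..n}. a i \<in> colon_ideal R (PIdl x) (annihilator R y)"
    and presentation: "presentation_exact R (free_mod R (Suc n)) (free_mod R (Suc n)) M
      (mat_map R (Suc n) (Suc n) (T_mat R n x y a)) g"
begin

lemma a_closed: "\<forall>i\<in>{1..n}. a i \<in> carrier R"
  using a_colon by (auto simp: colon_ideal_def)

lemma g_hom: "g \<in> mod_hom R (free_mod R (Suc n)) M"
  and T_image: "mat_map R (Suc n) (Suc n) (T_mat R n x y a) ` carrier (free_mod R (Suc n))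
    = mod_ker (free_mod R (Suc n)) M g"
  and g_surj: "g ` carrier (free_mod R (Suc n)) = carrier M"
  using presentation by (simp_all add: presentation_exact_def)

lemmas fibre_iff = T_presentation_fibre_iff[OF a_closed x y g_hom T_image]

lemma ideal_x: "ideal (PIdl x) R" and ideal_y: "ideal (PIdl y) R"
  using x y by (simp_all add: cgenideal_ideal)

lemma sub_map_exists:
  obtains f where "f \<in> mod_hom R (pow_mod (quot_mod R (PIdl x)) n) M"
    and "\<And>c. c \<in> carrier (free_mod R n) \<Longrightarrow> f (coset_vec R (PIdl x) n c) = g (vec_snoc n c \<zero>)"
proof (rule mod_hom_factor[OF free_mod_module coset_vec_hom[OF ideal_x le_refl] coset_vec_surj
      mod_hom_comp[OF vec_snoc_zero_hom g_hom]])
  fix c d assume c: "c \<in> carrier (free_mod R n)" and d: "d \<in> carrier (free_mod R n)"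
  assume "coset_vec R (PIdl x) n c = coset_vec R (PIdl x) n d"
  then have "\<forall>j\<in>{..<n}. \<exists>t\<in>carrier R. c j \<ominus> d j = t \<otimes> x"
    using c d by (auto simp: coset_vec_eq_iff[OF ideal_x] free_mod_carrier_iff PIdl_mem_iff)
  then obtain t where t: "\<forall>j\<in>{..<n}. t j \<in> carrier R \<and> c j \<ominus> d j = t j \<otimes> x"
    by metis
  have "c j = d j \<oplus> (x \<otimes> t j \<oplus> a (Suc j) \<otimes> \<zero>)" if "j < n" for j
  proof -
    have cd: "c j \<in> carrier R" "d j \<in> carrier R" "a (Suc j) \<in> carrier R"
      using c d a_closed that by (auto simp: free_mod_carrier_iff)
    then have "c j = d j \<oplus> (c j \<ominus> d j)" by algebra
    also have "c j \<ominus> d j = x \<otimes> t j \<oplus> a (Suc j) \<otimes> \<zero>"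
      using t that x cd by (simp add: m_comm)
    finally show ?thesis .
  qed
  then have "g (vec_snoc n c \<zero>) = g (vec_snoc n d \<zero>)"
    using c d t y by (subst fibre_iff) (auto simp: free_mod_carrier_iff intro!: exI[of _ t] exI[of _ \<zero>])
  then show "(g \<circ> (\<lambda>c. vec_snoc n c \<zero>)) c = (g \<circ> (\<lambda>c. vec_snoc n c \<zero>)) d"
    by simp
qed fastforce

lemma quotient_map_exists:
  obtains h where "h \<in> mod_hom R M (quot_mod R (PIdl y))"
    and "\<And>v. v \<in> carrier (free_mod R (Suc n)) \<Longrightarrow> h (g v) = PIdl y +> v n"
proof (rule mod_hom_factor[OF free_mod_module g_hom g_surj rcos_coord_hom[OF ideal_y lessI]])
  fix v v' assume v: "v \<in> carrier (free_mod R (Suc n))" and v': "v' \<in> carrier (free_mod R (Suc n))"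
  assume "g v = g v'"
  then have "g (vec_snoc n v (v n)) = g (vec_snoc n v' (v' n))"
    using v v' by (simp add: vec_snoc_eta)
  then obtain s where s: "s \<in> carrier R" "v n = v' n \<oplus> y \<otimes> s"
    using v v' by (subst (asm) fibre_iff) (auto simp: free_mod_carrier_iff)
  have "v n \<in> carrier R" "v' n \<in> carrier R"
    using v v' by (simp_all add: free_mod_carrier_iff)
  then have "v n \<ominus> v' n = s \<otimes> y"
    unfolding s(2) using s(1) y by algebra
  then show "PIdl y +> v n = PIdl y +> v' n"
    using \<open>v n \<in> carrier R\<close> \<open>v' n \<in> carrier R\<close> s(1)
    by (auto simp: rcos_eq_iff[OF ideal_y] PIdl_mem_iff)
qed fastforce

lemma sub_map_inj:
  assumes f: "\<And>c. c \<in> carrier (free_mod R n) \<Longrightarrow> f (coset_vec R (PIdl x) n c) = g (vec_snoc n c \<zero>)"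
  shows "inj_on f (carrier (pow_mod (quot_mod R (PIdl x)) n))"
proof (rule inj_onI)
  fix u v
  assume "u \<in> carrier (pow_mod (quot_mod R (PIdl x)) n)" "v \<in> carrier (pow_mod (quot_mod R (PIdl x)) n)"
  then obtain c d where c: "c \<in> carrier (free_mod R n)" "u = coset_vec R (PIdl x) n c"
    and d: "d \<in> carrier (free_mod R n)" "v = coset_vec R (PIdl x) n d"
    unfolding coset_vec_surj[symmetric] by blast
  assume "f u = f v"
  then have "g (vec_snoc n c \<zero>) = g (vec_snoc n d \<zero>)"
    using c d f by simp
  then obtain t s where t: "\<forall>i<n. t i \<in> carrier R" and s: "s \<in> carrier R"
    and cd: "\<forall>i<n. c i = d i \<oplus> (x \<otimes> t i \<oplus> a (Suc i) \<otimes> s)" and "\<zero> = \<zero> \<oplus> y \<otimes> s"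
    using c d by (subst (asm) fibre_iff) (auto simp: free_mod_carrier_iff)
  have "s \<in> annihilator R y"
    using \<open>\<zero> = \<zero> \<oplus> y \<otimes> s\<close> s y by (simp add: annihilator_def m_comm)
  have "c i \<ominus> d i \<in> PIdl x" if "i < n" for i
  proof -
    have carr: "d i \<in> carrier R" "t i \<in> carrier R" "a (Suc i) \<in> carrier R"
      using d t a_closed that by (auto simp: free_mod_carrier_iff)
    have "Suc i \<in> {1..n}" using that by simp
    then have "a (Suc i) \<otimes> s \<in> PIdl x"
      using a_colon \<open>s \<in> annihilator R y\<close> by (auto simp: colon_ideal_def)
    moreover have "x \<otimes> t i \<in> PIdl x"
      using carr x m_comm unfolding PIdl_mem_iff by blast
    ultimately have "x \<otimes> t i \<oplus> a (Suc i) \<otimes> s \<in> PIdl x"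
      using ideal_x by (simp add: ideal.axioms(1) additive_subgroup.a_closed)
    moreover have "c i \<ominus> d i = x \<otimes> t i \<oplus> a (Suc i) \<otimes> s"
      unfolding cd[rule_format, OF that] using carr s x by algebra
    ultimately show ?thesis by simp
  qed
  then show "u = v"
    using c d by (simp add: coset_vec_eq_iff[OF ideal_x] free_mod_carrier_iff)
qed


lemma sub_map_image:
  assumes f: "\<And>c. c \<in> carrier (free_mod R n) \<Longrightarrow> f (coset_vec R (PIdl x) n c) = g (vec_snoc n c \<zero>)"
    and h: "\<And>v. v \<in> carrier (free_mod R (Suc n)) \<Longrightarrow> h (g v) = PIdl y +> v n"
  shows "f ` carrier (pow_mod (quot_mod R (PIdl x)) n) = mod_ker M (quot_mod R (PIdl y)) h"
proof
  show "f ` carrier (pow_mod (quot_mod R (PIdl x)) n) \<subseteq> mod_ker M (quot_mod R (PIdl y)) h"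
  proof
    fix z assume "z \<in> f ` carrier (pow_mod (quot_mod R (PIdl x)) n)"
    then obtain c where c: "c \<in> carrier (free_mod R n)" "z = f (coset_vec R (PIdl x) n c)"
      unfolding coset_vec_surj[symmetric] by blast
    have snoc: "vec_snoc n c \<zero> \<in> carrier (free_mod R (Suc n))"
      using c by (intro vec_snoc_carrier) (auto simp: free_mod_carrier_iff)
    then have "h z = PIdl y +> \<zero>"
      using c f h by simp
    also have "\<dots> = PIdl y"
      using ideal_y by (rule rcos_zero_ideal)
    finally show "z \<in> mod_ker M (quot_mod R (PIdl y)) h"
      using snoc c f mod_homD(1)[OF g_hom] by (simp add: mod_ker_def quot_mod_simps)
  qed
  show "mod_ker M (quot_mod R (PIdl y)) h \<subseteq> f ` carrier (pow_mod (quot_mod R (PIdl x)) n)"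
  proof
    fix z assume "z \<in> mod_ker M (quot_mod R (PIdl y)) h"
    then have z: "z \<in> carrier M" "h z = PIdl y"
      by (simp_all add: mod_ker_def quot_mod_simps)
    then obtain v where v: "v \<in> carrier (free_mod R (Suc n))" "z = g v"
      using g_surj by blast
    have v_carr: "\<And>i. i < Suc n \<Longrightarrow> v i \<in> carrier R"
      using v by (simp add: free_mod_carrier_iff)
    have "v n \<in> PIdl y"
      using h v z v_carr rcos_eq_ideal_iff[OF ideal_y] by simp
    then obtain e where e: "e \<in> carrier R" "v n = e \<otimes> y"
      by (auto simp: PIdl_mem_iff)
    define c where "c = (\<lambda>j\<in>{..<n}. v j \<ominus> a (Suc j) \<otimes> e)"
    have c_carr: "c \<in> carrier (free_mod R n)"
      using v_carr a_closed e by (simp add: c_def free_mod_carrier_iff)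
    have vj: "v j = c j \<oplus> (x \<otimes> \<zero> \<oplus> a (Suc j) \<otimes> e)" if "j < n" for j
    proof -
      have "v j \<in> carrier R" "a (Suc j) \<in> carrier R"
        using v_carr a_closed that by auto
      then show ?thesis
        using that x e by (simp add: c_def) algebra
    qed
    have vn: "v n = \<zero> \<oplus> y \<otimes> e"
      using e y v_carr by (simp add: m_comm)
    have "g (vec_snoc n v (v n)) = g (vec_snoc n c \<zero>)"
    proof (rule fibre_iff[THEN iffD2])
      show "\<exists>t s. (\<forall>i<n. t i \<in> carrier R) \<and> s \<in> carrier R
        \<and> (\<forall>i<n. v i = c i \<oplus> (x \<otimes> t i \<oplus> a (Suc i) \<otimes> s)) \<and> v n = \<zero> \<oplus> y \<otimes> s"
        using vj vn e by (intro exI[of _ "\<lambda>_. \<zero>"] exI[of _ e]) simp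
    qed (use v_carr c_carr in \<open>auto simp: free_mod_carrier_iff\<close>)
    then have "z = f (coset_vec R (PIdl x) n c)"
      using v c_carr f by (simp add: vec_snoc_eta)
    then show "z \<in> f ` carrier (pow_mod (quot_mod R (PIdl x)) n)"
      using c_carr coset_vec_surj by blast
  qed
qed

lemma quotient_map_surj:
  assumes h_hom: "h \<in> mod_hom R M (quot_mod R (PIdl y))"
    and h: "\<And>v. v \<in> carrier (free_mod R (Suc n)) \<Longrightarrow> h (g v) = PIdl y +> v n"
  shows "h ` carrier M = carrier (quot_mod R (PIdl y))"
proof
  show "h ` carrier M \<subseteq> carrier (quot_mod R (PIdl y))"
    using mod_homD(1)[OF h_hom] by blast
  show "carrier (quot_mod R (PIdl y)) \<subseteq> h ` carrier M"
  proof
    fix X assume "X \<in> carrier (quot_mod R (PIdl y))"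
    then obtain r where r: "r \<in> carrier R" "X = PIdl y +> r"
      by (auto simp: quot_mod_carrier_iff)
    then have v: "vec_snoc n (\<lambda>_. \<zero>) r \<in> carrier (free_mod R (Suc n))"
      by (intro vec_snoc_carrier) auto
    then have "X = h (g (vec_snoc n (\<lambda>_. \<zero>) r))"
      using h r by simp
    then show "X \<in> h ` carrier M"
      using v mod_homD(1)[OF g_hom] by blast
  qed
qed

theorem short_exact_exists:
  "\<exists>f h. short_exact R (pow_mod (quot_mod R (PIdl x)) n) M (quot_mod R (PIdl y)) f h"
proof -
  obtain f where f: "f \<in> mod_hom R (pow_mod (quot_mod R (PIdl x)) n) M"
    "\<And>c. c \<in> carrier (free_mod R n) \<Longrightarrow> f (coset_vec R (PIdl x) n c) = g (vec_snoc n c \<zero>)"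
    using sub_map_exists by blast
  obtain h where h: "h \<in> mod_hom R M (quot_mod R (PIdl y))"
    "\<And>v. v \<in> carrier (free_mod R (Suc n)) \<Longrightarrow> h (g v) = PIdl y +> v n"
    using quotient_map_exists by blast
  have "short_exact R (pow_mod (quot_mod R (PIdl x)) n) M (quot_mod R (PIdl y)) f h"
    unfolding short_exact_def
    using f h sub_map_inj sub_map_image quotient_map_surj by blast
  then show ?thesis by blast
qed

end

section \<open>From an extension to a presentation by \<open>T\<close>\<close>

lemma (in module) coord_smult_hom:
  assumes "i < k" "m \<in> carrier M"
  shows "(\<lambda>v. v i \<odot>\<^bsub>M\<^esub> m) \<in> mod_hom R (free_mod R k) M"
proof -
  have [simp]: "v \<in> carrier (free_mod R k) \<Longrightarrow> v i \<in> carrier R" for v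
    using \<open>i < k\<close> by (simp add: free_mod_carrier_iff)
  show ?thesis
    unfolding mod_hom_def
  proof (intro CollectI conjI ballI)
    show "(\<lambda>v. v i \<odot>\<^bsub>M\<^esub> m) \<in> carrier (free_mod R k) \<rightarrow> carrier M"
      using \<open>m \<in> carrier M\<close> by simp
  next
    fix u v assume "u \<in> carrier (free_mod R k)" "v \<in> carrier (free_mod R k)"
    then show "(u \<oplus>\<^bsub>free_mod R k\<^esub> v) i \<odot>\<^bsub>M\<^esub> m = u i \<odot>\<^bsub>M\<^esub> m \<oplus>\<^bsub>M\<^esub> v i \<odot>\<^bsub>M\<^esub> m"
      using assms by (simp add: pow_mod_simps self_mod_simps smult_l_distr)
  next
    fix r v assume "r \<in> carrier R" "v \<in> carrier (free_mod R k)"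
    then show "(r \<odot>\<^bsub>free_mod R k\<^esub> v) i \<odot>\<^bsub>M\<^esub> m = r \<odot>\<^bsub>M\<^esub> (v i \<odot>\<^bsub>M\<^esub> m)"
      using assms by (simp add: pow_mod_simps self_mod_simps smult_assoc1)
  qed
qed

locale cyclic_extension = module R M for R :: "('a, 'c) ring_scheme" (structure)
    and M :: "('a, 'b, 'd) module_scheme" +
  fixes n :: nat and x y :: 'a and f :: "(nat \<Rightarrow> 'a set) \<Rightarrow> 'b" and h :: "'b \<Rightarrow> 'a set"
    and m :: 'b and b :: "nat \<Rightarrow> 'a"
  assumes x: "x \<in> carrier R" and y: "y \<in> carrier R"
    and exact: "short_exact R (pow_mod (quot_mod R (PIdl x)) n) M (quot_mod R (PIdl y)) f h"
    and m: "m \<in> carrier M" "h m = PIdl y +> \<one>"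
    and b: "b \<in> carrier (free_mod R n)" "y \<odot>\<^bsub>M\<^esub> m = f (coset_vec R (PIdl x) n b)"
begin

text \<open>The last column of \<open>T_mat\<close> holds \<open>a 1, \<dots>, a n\<close> in rows \<open>0, \<dots>, n - 1\<close>, hence the shift.\<close>
definition coeffs :: "nat \<Rightarrow> 'a" where
  "coeffs i = \<ominus> b (i - 1)"

text \<open>\<open>coset_vec R (PIdl x) n\<close> only reads the first \<open>n\<close> coordinates of \<open>v\<close>.\<close>
definition pres_map :: "(nat \<Rightarrow> 'a) \<Rightarrow> 'b" where
  "pres_map v = f (coset_vec R (PIdl x) n v) \<oplus>\<^bsub>M\<^esub> v n \<odot>\<^bsub>M\<^esub> m"

lemma ideal_x: "ideal (PIdl x) R" and ideal_y: "ideal (PIdl y) R"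
  using x y by (simp_all add: cgenideal_ideal)

lemma f_hom: "f \<in> mod_hom R (pow_mod (quot_mod R (PIdl x)) n) M"
  and h_hom: "h \<in> mod_hom R M (quot_mod R (PIdl y))"
  and f_inj: "inj_on f (carrier (pow_mod (quot_mod R (PIdl x)) n))"
  and f_image: "f ` carrier (pow_mod (quot_mod R (PIdl x)) n) = mod_ker M (quot_mod R (PIdl y)) h"
  using exact by (simp_all add: short_exact_def)

lemma b_closed: "\<And>j. j < n \<Longrightarrow> b j \<in> carrier R"
  using b by (simp add: free_mod_carrier_iff)

lemma f_coset_vec_eq_zero_iff:
  assumes "\<And>j. j < n \<Longrightarrow> c j \<in> carrier R"
  shows "f (coset_vec R (PIdl x) n c) = \<zero>\<^bsub>M\<^esub> \<longleftrightarrow> (\<forall>j<n. c j \<in> PIdl x)"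
proof -
  have zero: "\<zero>\<^bsub>pow_mod (quot_mod R (PIdl x)) n\<^esub> = coset_vec R (PIdl x) n (\<lambda>_. \<zero>)"
    using ideal_x by (simp add: coset_vec_def pow_mod_simps quot_mod_simps rcos_zero_ideal)
  have "f \<zero>\<^bsub>pow_mod (quot_mod R (PIdl x)) n\<^esub> = \<zero>\<^bsub>M\<^esub>"
    by (rule mod_hom_zero[OF module.pow_mod_module[OF quot_mod_module[OF ideal_x]] module_axioms f_hom])
  then have "f (coset_vec R (PIdl x) n c) = \<zero>\<^bsub>M\<^esub>
      \<longleftrightarrow> coset_vec R (PIdl x) n c = coset_vec R (PIdl x) n (\<lambda>_. \<zero>)"
    using f_inj assms by (auto simp: zero inj_on_def coset_vec_carrier)
  also have "\<dots> \<longleftrightarrow> (\<forall>j<n. c j \<in> PIdl x)"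
    using assms by (simp add: coset_vec_eq_iff[OF ideal_x] a_minus_def)
  finally show ?thesis .
qed

lemma h_f: "u \<in> carrier (pow_mod (quot_mod R (PIdl x)) n) \<Longrightarrow> h (f u) = PIdl y"
  using f_image by (force simp: mod_ker_def quot_mod_simps)

lemma h_smult_m: "r \<in> carrier R \<Longrightarrow> h (r \<odot>\<^bsub>M\<^esub> m) = PIdl y +> r"
  using mod_homD(3)[OF h_hom _ m(1)] m quot_mod_rcos_smult[OF ideal_y] by simp

lemma coeffs_Suc: "coeffs (Suc i) = \<ominus> b i"
  by (simp add: coeffs_def)

lemma coeffs_closed: "\<forall>i\<in>{1..n}. coeffs i \<in> carrier R"
  using b_closed by (auto simp: coeffs_def)

lemma coeffs_colon: "\<forall>i\<in>{1..n}. coeffs i \<in> colon_ideal R (PIdl x) (annihilator R y)"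
proof (intro ballI)
  fix i assume i: "i \<in> {1..n}"
  have "coeffs i \<otimes> s \<in> PIdl x" if "s \<in> annihilator R y" for s
  proof -
    have s: "s \<in> carrier R" "s \<otimes> y = \<zero>"
      using that by (simp_all add: annihilator_def)
    have "f (coset_vec R (PIdl x) n (\<lambda>j. s \<otimes> b j))
        = f (s \<odot>\<^bsub>pow_mod (quot_mod R (PIdl x)) n\<^esub> coset_vec R (PIdl x) n b)"
      using s b_closed by (simp add: coset_vec_smult[OF ideal_x])
    also have "\<dots> = s \<odot>\<^bsub>M\<^esub> (y \<odot>\<^bsub>M\<^esub> m)"
      using s b_closed mod_homD(3)[OF f_hom] b(2) by (simp add: coset_vec_carrier)
    also have "\<dots> = \<zero>\<^bsub>M\<^esub>"
      using s y m by (simp flip: smult_assoc1)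
    finally have "s \<otimes> b (i - 1) \<in> PIdl x"
      using i s b_closed by (subst (asm) f_coset_vec_eq_zero_iff) auto
    moreover have "b (i - 1) \<in> carrier R"
      using i by (intro b_closed) auto
    then have "coeffs i \<otimes> s = \<ominus> (s \<otimes> b (i - 1))"
      using s by (simp add: coeffs_def l_minus r_minus m_comm)
    ultimately show ?thesis
      using ideal_x by (simp add: additive_subgroup.a_inv_closed ideal.axioms(1))
  qed
  then show "coeffs i \<in> colon_ideal R (PIdl x) (annihilator R y)"
    using i coeffs_closed by (simp add: colon_ideal_def)
qed

lemma pres_map_hom: "pres_map \<in> mod_hom R (free_mod R (Suc n)) M"
  using mod_hom_add[OF mod_hom_comp[OF coset_vec_hom[OF ideal_x] f_hom] coord_smult_hom[OF lessI m(1)]]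
  by (simp add: pres_map_def[abs_def] comp_def)

lemma pres_map_vec_snoc: "pres_map (vec_snoc n t s) = f (coset_vec R (PIdl x) n t) \<oplus>\<^bsub>M\<^esub> s \<odot>\<^bsub>M\<^esub> m"
  by (simp add: pres_map_def coset_vec_cong[of n "vec_snoc n t s" t])

lemma pres_map_T:
  assumes w: "w \<in> carrier (free_mod R (Suc n))"
  shows "pres_map (mat_map R (Suc n) (Suc n) (T_mat R n x y coeffs) w) = \<zero>\<^bsub>M\<^esub>"
proof -
  let ?I = "PIdl x" and ?Q = "pow_mod (quot_mod R (PIdl x)) n"
  have t: "\<And>i. i < n \<Longrightarrow> w i \<in> carrier R" and s: "w n \<in> carrier R"
    using w by (simp_all add: free_mod_carrier_iff)
  have "coset_vec R ?I n (\<lambda>i. x \<otimes> w i \<oplus> coeffs (Suc i) \<otimes> w n)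
      = coset_vec R ?I n (\<lambda>i. \<ominus> w n \<otimes> b i)"
  proof -
    have "x \<otimes> w i \<oplus> coeffs (Suc i) \<otimes> w n \<ominus> \<ominus> w n \<otimes> b i \<in> ?I" if "i < n" for i
    proof -
      have "x \<otimes> w i \<oplus> coeffs (Suc i) \<otimes> w n \<ominus> \<ominus> w n \<otimes> b i = w i \<otimes> x"
        using t[OF that] s x b_closed[OF that] unfolding coeffs_Suc by algebra
      then show ?thesis
        using t[OF that] unfolding PIdl_mem_iff by auto
    qed
    then show ?thesis
      using t s x b_closed coeffs_closed by (subst coset_vec_eq_iff[OF ideal_x]) (auto simp: coeffs_def)
  qed
  also have "\<dots> = \<ominus> w n \<odot>\<^bsub>?Q\<^esub> coset_vec R ?I n b"
    using s b_closed by (simp add: coset_vec_smult[OF ideal_x])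
  finally have "f (coset_vec R ?I n (\<lambda>i. x \<otimes> w i \<oplus> coeffs (Suc i) \<otimes> w n))
      = \<ominus> w n \<odot>\<^bsub>M\<^esub> (y \<odot>\<^bsub>M\<^esub> m)"
    using s b_closed b(2) mod_homD(3)[OF f_hom] by (simp add: coset_vec_carrier)
  moreover have "mat_map R (Suc n) (Suc n) (T_mat R n x y coeffs) w
      = vec_snoc n (\<lambda>i. x \<otimes> w i \<oplus> coeffs (Suc i) \<otimes> w n) (y \<otimes> w n)"
    using mat_map_T_mat_vec_snoc[OF coeffs_closed x y, of w "w n"] t s by (simp add: vec_snoc_eta[OF w])
  ultimately have "pres_map (mat_map R (Suc n) (Suc n) (T_mat R n x y coeffs) w)
      = \<ominus> w n \<odot>\<^bsub>M\<^esub> (y \<odot>\<^bsub>M\<^esub> m) \<oplus>\<^bsub>M\<^esub> (y \<otimes> w n) \<odot>\<^bsub>M\<^esub> m"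
    by (simp add: pres_map_vec_snoc)
  also have "\<dots> = (\<ominus> w n \<oplus> w n) \<odot>\<^bsub>M\<^esub> (y \<odot>\<^bsub>M\<^esub> m)"
    using s y m by (simp add: smult_l_distr m_comm[OF y s] smult_assoc1)
  also have "\<dots> = \<zero>\<^bsub>M\<^esub>"
    using s y m(1) by (simp add: R.l_neg)
  finally show ?thesis .
qed

lemma pres_map_kernel:
  assumes v: "v \<in> carrier (free_mod R (Suc n))" and zero: "pres_map v = \<zero>\<^bsub>M\<^esub>"
  shows "v \<in> mat_map R (Suc n) (Suc n) (T_mat R n x y coeffs) ` carrier (free_mod R (Suc n))"
proof -
  let ?I = "PIdl x" and ?J = "PIdl y" and ?Q = "pow_mod (quot_mod R (PIdl x)) n"
  have t: "\<And>i. i < n \<Longrightarrow> v i \<in> carrier R" and s: "v n \<in> carrier R"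
    using v by (simp_all add: free_mod_carrier_iff)
  have cv: "coset_vec R ?I n v \<in> carrier ?Q"
    using t by (rule coset_vec_carrier)
  have "h (pres_map v) = (?J +> \<zero>) \<oplus>\<^bsub>quot_mod R ?J\<^esub> (?J +> v n)"
    using cv s m mod_homD(1)[OF f_hom] mod_homD(2)[OF h_hom]
    by (simp add: pres_map_def h_f h_smult_m rcos_zero_ideal[OF ideal_y])
  also have "\<dots> = ?J +> v n"
    using s by (simp add: quot_mod_rcos_add[OF ideal_y])
  finally have "?J +> v n = ?J"
    using zero mod_hom_zero[OF module_axioms quot_mod_module[OF ideal_y] h_hom] by (simp add: quot_mod_simps)
  then obtain e where e: "e \<in> carrier R" "v n = e \<otimes> y"
    using s by (auto simp: rcos_eq_ideal_iff[OF ideal_y] PIdl_mem_iff)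
  have "v n \<odot>\<^bsub>M\<^esub> m = e \<odot>\<^bsub>M\<^esub> f (coset_vec R ?I n b)"
    using e y m by (simp add: smult_assoc1 b(2)[symmetric])
  also have "\<dots> = f (coset_vec R ?I n (\<lambda>j. e \<otimes> b j))"
    using e b_closed mod_homD(3)[OF f_hom] by (simp add: coset_vec_carrier flip: coset_vec_smult[OF ideal_x])
  finally have "\<zero>\<^bsub>M\<^esub> = f (coset_vec R ?I n v) \<oplus>\<^bsub>M\<^esub> f (coset_vec R ?I n (\<lambda>j. e \<otimes> b j))"
    using zero by (simp add: pres_map_def)
  also have "\<dots> = f (coset_vec R ?I n (\<lambda>j. v j \<oplus> e \<otimes> b j))"
    using t e b_closed mod_homD(2)[OF f_hom]
    by (simp add: coset_vec_carrier flip: coset_vec_add[OF ideal_x])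
  finally have "\<forall>j<n. v j \<oplus> e \<otimes> b j \<in> ?I"
    using t e b_closed by (subst (asm) eq_commute, subst (asm) f_coset_vec_eq_zero_iff) auto
  then have "\<forall>j\<in>{..<n}. \<exists>u\<in>carrier R. v j \<oplus> e \<otimes> b j = u \<otimes> x"
    by (simp add: PIdl_mem_iff)
  then obtain u where u: "\<forall>j\<in>{..<n}. u j \<in> carrier R \<and> v j \<oplus> e \<otimes> b j = u j \<otimes> x"
    by metis
  have "x \<otimes> u i \<oplus> coeffs (Suc i) \<otimes> e = v i" if "i < n" for i
  proof -
    have carr: "u i \<in> carrier R" "v i \<in> carrier R" "b i \<in> carrier R"
      using u b_closed t that by auto
    have "x \<otimes> u i \<oplus> coeffs (Suc i) \<otimes> e = u i \<otimes> x \<ominus> e \<otimes> b i"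
      using carr x e unfolding coeffs_Suc by algebra
    also have "\<dots> = (v i \<oplus> e \<otimes> b i) \<ominus> e \<otimes> b i"
      using u that by simp
    also have "\<dots> = v i"
      using carr e by algebra
    finally show ?thesis .
  qed
  then have "mat_map R (Suc n) (Suc n) (T_mat R n x y coeffs) (vec_snoc n u e) = vec_snoc n v (v n)"
    using u e y mat_map_T_mat_vec_snoc[OF coeffs_closed x y, of u e]
    by (simp add: vec_snoc_eq_iff m_comm)
  then have "mat_map R (Suc n) (Suc n) (T_mat R n x y coeffs) (vec_snoc n u e) = v"
    by (simp add: vec_snoc_eta[OF v])
  moreover have "vec_snoc n u e \<in> carrier (free_mod R (Suc n))"
    using u e by (intro vec_snoc_carrier) auto
  ultimately show ?thesis by blast
qed

lemma pres_map_surj: "pres_map ` carrier (free_mod R (Suc n)) = carrier M"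
proof
  show "pres_map ` carrier (free_mod R (Suc n)) \<subseteq> carrier M"
    using mod_homD(1)[OF pres_map_hom] by blast
  show "carrier M \<subseteq> pres_map ` carrier (free_mod R (Suc n))"
  proof
    fix z assume z: "z \<in> carrier M"
    then obtain c where c: "c \<in> carrier R" "h z = PIdl y +> c"
      using mod_homD(1)[OF h_hom] by (auto simp: quot_mod_carrier_iff)
    let ?z' = "z \<oplus>\<^bsub>M\<^esub> (\<ominus> c) \<odot>\<^bsub>M\<^esub> m"
    have z': "?z' \<in> carrier M"
      using z c m by simp
    have "h ?z' = (PIdl y +> c) \<oplus>\<^bsub>quot_mod R (PIdl y)\<^esub> (PIdl y +> \<ominus> c)"
      using z c m mod_homD(2)[OF h_hom] by (simp add: h_smult_m)
    also have "\<dots> = PIdl y"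
      using c by (simp add: quot_mod_rcos_add[OF ideal_y] R.r_neg rcos_zero_ideal[OF ideal_y])
    finally have "?z' \<in> f ` coset_vec R (PIdl x) n ` carrier (free_mod R n)"
      using z' f_image by (simp add: coset_vec_surj mod_ker_def quot_mod_simps)
    then obtain d where d: "d \<in> carrier (free_mod R n)" "?z' = f (coset_vec R (PIdl x) n d)"
      by blast
    have "pres_map (vec_snoc n d c) = ?z' \<oplus>\<^bsub>M\<^esub> c \<odot>\<^bsub>M\<^esub> m"
      using d by (simp add: pres_map_vec_snoc)
    also have "\<dots> = z \<oplus>\<^bsub>M\<^esub> (\<ominus> c \<oplus> c) \<odot>\<^bsub>M\<^esub> m"
      using z c m by (simp add: smult_l_distr M.a_assoc)
    also have "\<dots> = z"
      using z c m by (simp add: R.l_neg)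
    finally show "z \<in> pres_map ` carrier (free_mod R (Suc n))"
      using c d by (metis image_eqI free_mod_carrier_iff vec_snoc_carrier)
  qed
qed

theorem presentation:
  "presentation_exact R (free_mod R (Suc n)) (free_mod R (Suc n)) M
    (mat_map R (Suc n) (Suc n) (T_mat R n x y coeffs)) pres_map"
  unfolding presentation_exact_def
proof (intro conjI)
  show "mat_map R (Suc n) (Suc n) (T_mat R n x y coeffs) ` carrier (free_mod R (Suc n))
      = mod_ker (free_mod R (Suc n)) M pres_map"
    using pres_map_T pres_map_kernel mod_homD(1)[OF T_mat_hom[OF coeffs_closed x y]]
    by (auto simp: mod_ker_def)
qed (simp_all add: T_mat_hom[OF coeffs_closed x y] pres_map_hom pres_map_surj)

end

lemma (in module) cyclic_extension_exists:
  assumes x: "x \<in> carrier R" and y: "y \<in> carrier R"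
    and exact: "short_exact R (pow_mod (quot_mod R (PIdl x)) n) M (quot_mod R (PIdl y)) f h"
  obtains m b where "cyclic_extension R M n x y f h m b"
proof -
  have J: "ideal (PIdl y) R" using y by (rule cgenideal_ideal)
  have h_hom: "h \<in> mod_hom R M (quot_mod R (PIdl y))"
    and f_image: "f ` carrier (pow_mod (quot_mod R (PIdl x)) n) = mod_ker M (quot_mod R (PIdl y)) h"
    and h_surj: "h ` carrier M = carrier (quot_mod R (PIdl y))"
    using exact by (simp_all add: short_exact_def)
  obtain m where m: "m \<in> carrier M" "h m = PIdl y +> \<one>"
    using h_surj by (metis imageE one_closed quot_mod_carrier_iff)
  have "h (y \<odot>\<^bsub>M\<^esub> m) = PIdl y"
    using y m mod_homD(3)[OF h_hom] J
    by (simp add: quot_mod_rcos_smult rcos_eq_ideal_iff cgenideal_self)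
  then have "y \<odot>\<^bsub>M\<^esub> m \<in> f ` coset_vec R (PIdl x) n ` carrier (free_mod R n)"
    using y m f_image by (simp add: coset_vec_surj mod_ker_def quot_mod_simps)
  then obtain b where "b \<in> carrier (free_mod R n)" "y \<odot>\<^bsub>M\<^esub> m = f (coset_vec R (PIdl x) n b)"
    by blast
  with m x y exact show ?thesis
    by (intro that) (unfold_locales)
qed

theorem lemma3p3:
  fixes R :: "'a ring" and M :: "('a, 'b) module" and x y :: 'a and n :: nat
  assumes "local_cring R" and "noetherian_ring R"
    and "x \<in> carrier R" and "y \<in> carrier R"
    and "module R M"
  shows "(\<exists>f g. short_exact R (pow_mod (quot_mod R (PIdl\<^bsub>R\<^esub> x)) n) M
                   (quot_mod R (PIdl\<^bsub>R\<^esub> y)) f g)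
     \<longleftrightarrow> (\<exists>a g. (\<forall>i\<in>{1..n}. a i \<in> colon_ideal R (PIdl\<^bsub>R\<^esub> x) (annihilator R y))
              \<and> presentation_exact R (pow_mod (self_mod R) (n + 1)) (pow_mod (self_mod R) (n + 1)) M
                   (mat_map R (n + 1) (n + 1) (T_mat R n x y a)) g)"
proof
  interpret module R M by fact
  assume "\<exists>f g. short_exact R (pow_mod (quot_mod R (PIdl\<^bsub>R\<^esub> x)) n) M (quot_mod R (PIdl\<^bsub>R\<^esub> y)) f g"
  then obtain f h where "short_exact R (pow_mod (quot_mod R (PIdl\<^bsub>R\<^esub> x)) n) M (quot_mod R (PIdl\<^bsub>R\<^esub> y)) f h"
    by blast
  then obtain m b where "cyclic_extension R M n x y f h m b"
    using cyclic_extension_exists assms(3,4) by blast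
  then interpret cyclic_extension R M n x y f h m b .
  show "\<exists>a g. (\<forall>i\<in>{1..n}. a i \<in> colon_ideal R (PIdl\<^bsub>R\<^esub> x) (annihilator R y))
      \<and> presentation_exact R (free_mod R (n + 1)) (free_mod R (n + 1)) M
          (mat_map R (n + 1) (n + 1) (T_mat R n x y a)) g"
    using coeffs_colon presentation by auto
next
  assume "\<exists>a g. (\<forall>i\<in>{1..n}. a i \<in> colon_ideal R (PIdl\<^bsub>R\<^esub> x) (annihilator R y))
      \<and> presentation_exact R (free_mod R (n + 1)) (free_mod R (n + 1)) M
          (mat_map R (n + 1) (n + 1) (T_mat R n x y a)) g"
  then obtain a g where "T_presentation R M n x y a g"
    using assms(3-5) by (auto simp: T_presentation_def T_presentation_axioms_def module.axioms)
  then show "\<exists>f h. short_exact R (pow_mod (quot_mod R (PIdl\<^bsub>R\<^esub> x)) n) M (quot_mod R (PIdl\<^bsub>R\<^esub> y)) f h"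
    by (rule T_presentation.short_exact_exists)
qed

end
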